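(* Let $a,b,c\ge 0$ be integers with $\gcd(a,b,c)=1$ and let $M$ be the list of vectors of $\mathbb{F}_2^2$ consisting of $(1,0)$ with multiplicity $a$, $(0,1)$ with multiplicity $b$ and $(1,1)$ with multiplicity $c$, assumed to generate $\mathbb{F}_2^2$. Let $K=K(G(\mathbb{F}_2^2,M))$. Then $$\operatorname{Syl}_2 K\cong\begin{cases}\mathbb{Z}/2^{v_2(b+c)+1}\mathbb{Z} & a\text{ odd},\ b,c\text{ even},\\ \mathbb{Z}/2^{v_2(a+b)+1}\mathbb{Z} & a,b\text{ odd},\ c\text{ even},\\ \mathbb{Z}/2^{e}\mathbb{Z}\times\mathbb{Z}/2^{f}\mathbb{Z} & a,b,c\text{ odd},\end{cases}$$ where $f=\max(v_2(a+b),v_2(b+c),v_2(a+c))+1$ and $e=v_2(|K|)-f$.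
   Context: For a finite list $M=(v_1,\dots,v_n)$ of nonzero vectors generating $\mathbb{F}_2^r$, the Cayley graph $G(\mathbb{F}_2^r,M)$ has vertex set $\mathbb{F}_2^r$ and Laplacian $L$ indexed by $\mathbb{F}_2^r$ with $L_{u,u}=n$ and $L_{u,w}=-\#\{i:u+v_i=w\}$ for $u\ne w$; $\operatorname{coker}L\cong\mathbb{Z}\oplus K(G)$ with $K(G)$ finite abelian (the sandpile group). $v_2$ denotes the $2$-adic valuation of a nonzero integer. *)

theory Defs
  imports "HOL-Algebra.Elementary_Groups" "HOL-Algebra.Coset"
          "HOL-Computational_Algebra.Primes"
begin

text \<open>Vectors of F_2^2 are pairs of booleans; addition is componentwise xor.\<close>
type_synonym vec2 = "bool \<times> bool"

definition vadd :: "vec2 \<Rightarrow> vec2 \<Rightarrow> vec2" where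
  "vadd u w = (fst u \<noteq> fst w, snd u \<noteq> snd w)"

definition vzero :: vec2 where "vzero = (False, False)"

text \<open>M generates F_2^2: every vector is a sum of elements of M (over F_2 the span
  is the set of sums of sub-lists).\<close>
definition generates :: "vec2 list \<Rightarrow> bool" where
  "generates M \<longleftrightarrow> (\<forall>w. \<exists>xs. set xs \<subseteq> set M \<and> w = foldr vadd xs vzero)"

definition cayley_laplacian :: "vec2 list \<Rightarrow> vec2 \<Rightarrow> vec2 \<Rightarrow> int" where
  "cayley_laplacian M u w =
     (if u = w then int (length M)
      else - int (card {i. i < length M \<and> vadd u (M ! i) = w}))"

definition free_ab :: "('v \<Rightarrow> int) monoid" where
  "free_ab = \<lparr>carrier = UNIV, monoid.mult = (\<lambda>x y v. x v + y v), one = (\<lambda>_. 0)\<rparr>"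

definition lap_image :: "('v::finite \<Rightarrow> 'v \<Rightarrow> int) \<Rightarrow> ('v \<Rightarrow> int) set" where
  "lap_image L = {(\<lambda>u. \<Sum>w\<in>UNIV. L u w * x w) | x. True}"

definition coker :: "('v::finite \<Rightarrow> 'v \<Rightarrow> int) \<Rightarrow> ('v \<Rightarrow> int) set monoid" where
  "coker L = free_ab Mod (lap_image L)"

text \<open>Sandpile group: the torsion subgroup K of coker L (coker L = Z + K).\<close>
definition sandpile_group :: "('v::finite \<Rightarrow> 'v \<Rightarrow> int) \<Rightarrow> ('v \<Rightarrow> int) set monoid" where
  "sandpile_group L = (coker L)\<lparr>carrier :=
     {X \<in> carrier (coker L). \<exists>n::nat. n > 0 \<and> X [^]\<^bsub>coker L\<^esub> n = \<one>\<^bsub>coker L\<^esub>}\<rparr>"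

definition sylow_subgroup :: "nat \<Rightarrow> ('a, 'b) monoid_scheme \<Rightarrow> 'a set \<Rightarrow> bool" where
  "sylow_subgroup p G P \<longleftrightarrow> subgroup P G \<and> card P = p ^ multiplicity p (order G)"

definition M_abc :: "nat \<Rightarrow> nat \<Rightarrow> nat \<Rightarrow> vec2 list" where
  "M_abc a b c = replicate a (True, False) @ replicate b (False, True) @ replicate c (True, True)"

end

(* The Laplacian L of G(F_2^2, M) is diagonalised by the characters of F_2^2: on the
   character of a nonzero w it acts by 2 p_w, where p_w is the number of elements of M not
   orthogonal to w (for M = M_abc these are b + c, a + c and a + b). The sandpile group is the
   torsion of Z^4 / L Z^4, i.e. the classes of vectors with coordinate sum zero. Its Sylow
   2-subgroup is identified with an explicit 2-group T through a homomorphism built from the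
   sums S_w(x) of x over the lines {u. u.w = 1}, reduced modulo powers of 2: it kills L Z^4, is
   onto from the sum-zero vectors, and every class of order 2 in its kernel is trivial. When
   exactly one p_w is even, T = Z/2^(v_2(p_w)+1). When a, b, c are odd, the p_w are even and add
   up to 2(a + b + c), so exactly one of them, say p_w1, has v_2(p_w1) = 1, and
   T = Z/2^(v_2(p_w2)+1) x Z/2^(v_2(p_w3)+1) for the other two. *)

theory Submission
  imports Defs "HOL-Algebra.Multiplicative_Group"
begin

section \<open>Sylow subgroups and surjections onto p-groups\<close>

lemma (in group_hom) kernel_no_power_torsion:
  fixes p :: nat
  assumes no_torsion: "\<And>x. x \<in> carrier G \<Longrightarrow> h x = \<one>\<^bsub>H\<^esub> \<Longrightarrow> x [^] p = \<one> \<Longrightarrow> x = \<one>"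
  shows "x \<in> carrier G \<Longrightarrow> h x = \<one>\<^bsub>H\<^esub> \<Longrightarrow> x [^] (p ^ k) = \<one> \<Longrightarrow> x = \<one>"
proof (induction k arbitrary: x)
  case 0
  then show ?case by (simp add: G.nat_pow_eone)
next
  case (Suc k)
  have "(x [^] p) [^] (p ^ k) = \<one>"
    using Suc.prems by (simp add: G.nat_pow_pow mult.commute)
  moreover have "h (x [^] p) = \<one>\<^bsub>H\<^esub>"
    using Suc.prems by (simp add: hom_nat_pow)
  ultimately have "x [^] p = \<one>"
    using Suc.IH Suc.prems(1) by simp
  then show ?case
    using no_torsion Suc.prems by blast
qed

lemma (in group_hom) card_dvd_order_if_surj:
  assumes "h ` carrier G = carrier H"
  shows "card (carrier H) dvd order G"
proof -
  have "card (carrier (G Mod kernel G H h)) = card (carrier H)"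
    using FactGroup_iso[OF assms] by (rule iso_same_card)
  then have "card (rcosets kernel G H h) = card (carrier H)"
    by (simp add: FactGroup_def)
  then show ?thesis
    using G.lagrange[OF subgroup_kernel] by (metis dvd_triv_left)
qed

lemma (in group_hom) inj_on_subgroup_if_no_torsion:
  fixes p :: nat
  assumes sub: "subgroup P G" and card_P: "card P = p ^ v"
    and no_torsion: "\<And>x. x \<in> carrier G \<Longrightarrow> h x = \<one>\<^bsub>H\<^esub> \<Longrightarrow> x [^] p = \<one> \<Longrightarrow> x = \<one>"
  shows "inj_on h P"
proof (rule inj_onI)
  interpret P: group "G\<lparr>carrier := P\<rparr>"
    using sub by (rule G.subgroup_imp_group)
  fix x y assume xy: "x \<in> P" "y \<in> P" "h x = h y"
  have xy_G: "x \<in> carrier G" "y \<in> carrier G"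
    using xy subgroup.subset[OF sub] by auto
  define z where "z = x \<otimes> inv y"
  have z: "z \<in> P" "z \<in> carrier G"
    using sub xy xy_G by (auto simp: z_def subgroup.m_closed subgroup.m_inv_closed)
  have "z [^] (p ^ v) = \<one>"
    using P.pow_order_eq_1[of z] z card_P by (simp add: order_def G.nat_pow_consistent[symmetric])
  moreover have "h z = \<one>\<^bsub>H\<^esub>"
    using xy xy_G by (simp add: z_def)
  ultimately have "z = \<one>"
    using kernel_no_power_torsion[OF no_torsion] z by blast
  then have "x \<otimes> inv y \<otimes> y = y"
    using xy_G by (simp add: z_def)
  then show "x = y"
    using xy_G by (simp add: G.m_assoc)
qed

lemma (in group_hom) sylow_subgroup_iso_of_surj:
  assumes fin: "finite (carrier G)" and p: "prime p"
    and P: "sylow_subgroup p G P"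
    and onto: "h ` carrier G = carrier H" and card_H: "card (carrier H) = p ^ n"
    and no_torsion: "\<And>x. x \<in> carrier G \<Longrightarrow> h x = \<one>\<^bsub>H\<^esub> \<Longrightarrow> x [^] p = \<one> \<Longrightarrow> x = \<one>"
  shows "G\<lparr>carrier := P\<rparr> \<cong> H \<and> n = multiplicity p (order G)"
proof -
  define v where "v = multiplicity p (order G)"
  have sub: "subgroup P G" and card_P: "card P = p ^ v"
    using P by (simp_all add: sylow_subgroup_def v_def)
  have inj: "inj_on h P"
    using sub card_P no_torsion by (rule inj_on_subgroup_if_no_torsion)
  have "order G \<noteq> 0"
    using fin by (simp add: G.order_gt_0_iff_finite[symmetric])
  moreover have "p ^ n dvd order G"
    using card_dvd_order_if_surj[OF onto] card_H by simp
  ultimately have "n \<le> v"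
    unfolding v_def using p by (intro multiplicity_geI) (auto dest: prime_elem_not_unit)
  have fin_H: "finite (carrier H)"
    using onto fin by (metis finite_imageI)
  have hP: "h ` P \<subseteq> carrier H"
    using onto subgroup.subset[OF sub] by blast
  have "p ^ v \<le> p ^ n"
    using card_inj_on_le[OF inj hP fin_H] card_P card_H by simp
  then have "v = n"
    using \<open>n \<le> v\<close> power_le_imp_le_exp[OF prime_gt_1_nat[OF p]] by (simp add: le_antisym)
  then have "h ` P = carrier H"
    using card_subset_eq[OF fin_H hP] card_image[OF inj] card_P card_H by simp
  then have "h \<in> iso (G\<lparr>carrier := P\<rparr>) H"
    using inj subgroup.subset[OF sub] by (auto simp: iso_def hom_def bij_betw_def Pi_iff subset_iff)
  then show ?thesis
    using \<open>v = n\<close> by (auto simp: is_iso_def v_def)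
qed

section \<open>Torsion of quotients of Z^V\<close>

definition torsion :: "('a, 'b) monoid_scheme \<Rightarrow> 'a set" where
  "torsion G = {x \<in> carrier G. \<exists>n::nat. n > 0 \<and> x [^]\<^bsub>G\<^esub> n = \<one>\<^bsub>G\<^esub>}"

lemma (in comm_group) subgroup_torsion: "subgroup (torsion G) G"
proof (rule subgroupI)
  show "torsion G \<subseteq> carrier G" "torsion G \<noteq> {}"
    by (auto simp: torsion_def intro!: exI[of _ "1::nat"])
next
  fix x assume "x \<in> torsion G"
  then show "inv x \<in> torsion G"
    by (auto simp: torsion_def nat_pow_inv)
next
  fix x y assume "x \<in> torsion G" "y \<in> torsion G"
  then obtain n k :: nat where x: "x \<in> carrier G" "n > 0" "x [^] n = \<one>"
    and y: "y \<in> carrier G" "k > 0" "y [^] k = \<one>"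
    by (auto simp: torsion_def)
  have "x [^] (n * k) = \<one>"
    using x by (metis nat_pow_one nat_pow_pow)
  moreover have "y [^] (n * k) = \<one>"
    using y by (metis mult.commute nat_pow_one nat_pow_pow)
  ultimately have "(x \<otimes> y) [^] (n * k) = \<one>"
    using x y by (simp add: pow_mult_distrib m_comm)
  then show "x \<otimes> y \<in> torsion G"
    using x y by (auto simp: torsion_def intro!: exI[of _ "n * k"])
qed

lemma sandpile_group_torsion:
  "sandpile_group L = (coker L)\<lparr>carrier := torsion (coker L)\<rparr>"
  by (simp add: sandpile_group_def torsion_def)

lemma carrier_free_ab [simp]: "carrier free_ab = UNIV"
  and mult_free_ab [simp]: "x \<otimes>\<^bsub>free_ab\<^esub> y = (\<lambda>v. x v + y v)"
  and one_free_ab [simp]: "\<one>\<^bsub>free_ab\<^esub> = (\<lambda>_. 0)"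
  by (simp_all add: free_ab_def)

lemma comm_group_free_ab: "comm_group free_ab"
proof (rule comm_groupI)
  fix x :: "'v \<Rightarrow> int"
  show "\<exists>y\<in>carrier free_ab. y \<otimes>\<^bsub>free_ab\<^esub> x = \<one>\<^bsub>free_ab\<^esub>"
    by (rule bexI[of _ "\<lambda>v. - x v"]) auto
qed (auto simp: algebra_simps)

interpretation free_ab: comm_group free_ab
  by (rule comm_group_free_ab)

lemma inv_free_ab [simp]: "inv\<^bsub>free_ab\<^esub> x = (\<lambda>v. - x v)"
  by (rule free_ab.inv_equality) auto

definition total :: "('v::finite \<Rightarrow> int) \<Rightarrow> int" where
  "total x = (\<Sum>v\<in>UNIV. x v)"

definition reduce_mod :: "nat \<Rightarrow> 'v \<Rightarrow> ('v::finite \<Rightarrow> int) \<Rightarrow> 'v \<Rightarrow> int" where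
  "reduce_mod N v0 x v = x v mod N - (if v = v0 then total (\<lambda>u. x u mod N) else 0)"

lemma total_reduce_mod: "total (reduce_mod N v0 x) = 0"
  unfolding total_def reduce_mod_def by (simp add: sum_subtractf)

lemma reduce_mod_bounds:
  fixes x :: "'v::finite \<Rightarrow> int"
  assumes "N > 0"
  shows "reduce_mod N v0 x \<in> UNIV \<rightarrow> {- (int (card (UNIV :: 'v set)) * N) .. N}"
proof -
  have mod_N: "0 \<le> z mod N" "z mod N < N" for z :: int
    using assms by simp_all
  define t where "t = total (\<lambda>u. x u mod N)"
  have "0 \<le> t"
    unfolding t_def total_def using mod_N by (simp add: sum_nonneg)
  moreover have "t \<le> int (card (UNIV :: 'v set)) * N"
    unfolding t_def total_def using mod_N by (intro sum_bounded_above) (simp add: less_imp_le)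
  ultimately have "reduce_mod N v0 x v \<in> {- (int (card (UNIV :: 'v set)) * N) .. N}" for v
    using mod_N[of "x v"] unfolding reduce_mod_def t_def[symmetric] by auto
  then show ?thesis
    by simp
qed

context
  fixes H :: "('v::finite \<Rightarrow> int) set"
  assumes H: "subgroup H free_ab"
begin

lemma free_ab_normal: "H \<lhd> free_ab"
  using H by (rule free_ab.subgroup_imp_normal)

lemma free_ab_rcos_add:
  "(H #>\<^bsub>free_ab\<^esub> x) <#>\<^bsub>free_ab\<^esub> (H #>\<^bsub>free_ab\<^esub> y) = H #>\<^bsub>free_ab\<^esub> (\<lambda>v. x v + y v)"
  using normal.rcos_sum[OF free_ab_normal, of x y] by simp

lemma free_ab_rcos_eq_self_iff: "H #>\<^bsub>free_ab\<^esub> x = H \<longleftrightarrow> x \<in> H"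
  using free_ab.rcos_self[of x H] free_ab.coset_join2[of x H] H by auto

lemma free_ab_rcos_pow:
  "(H #>\<^bsub>free_ab\<^esub> x) [^]\<^bsub>free_ab Mod H\<^esub> (n::nat) = H #>\<^bsub>free_ab\<^esub> (\<lambda>v. int n * x v)"
proof (induction n)
  case 0
  then show ?case
    using free_ab_rcos_eq_self_iff[of "\<lambda>_. 0"] subgroup.one_closed[OF H] by simp
next
  case (Suc n)
  then show ?case
    by (simp add: free_ab_rcos_add algebra_simps)
qed

lemma free_ab_rcos_eq_if_diff:
  "(\<lambda>v. x v - y v) \<in> H \<Longrightarrow> H #>\<^bsub>free_ab\<^esub> x = H #>\<^bsub>free_ab\<^esub> y"
  using free_ab.coset_mult_assoc[of H "\<lambda>v. x v - y v" y] free_ab_rcos_eq_self_iff[of "\<lambda>v. x v - y v"] H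
  by (simp add: subgroup.subset)

lemma the_elem_image_rcos:
  assumes "group T" "phi \<in> hom free_ab T" "\<And>z. z \<in> H \<Longrightarrow> phi z = \<one>\<^bsub>T\<^esub>"
  shows "the_elem (phi ` (H #>\<^bsub>free_ab\<^esub> x)) = phi x"
proof -
  have "phi (z \<otimes>\<^bsub>free_ab\<^esub> x) = phi x" if "z \<in> H" for z
    using assms that hom_mult[OF assms(2), of z x] by (simp add: hom_in_carrier group.is_monoid monoid.l_one)
  then have "phi ` (H #>\<^bsub>free_ab\<^esub> x) = {phi x}"
    using free_ab.rcos_self[of x H] H unfolding r_coset_def by auto
  then show ?thesis
    by simp
qed

lemma free_ab_quotient_hom:
  assumes "group T" "phi \<in> hom free_ab T" "\<And>z. z \<in> H \<Longrightarrow> phi z = \<one>\<^bsub>T\<^esub>"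
  shows "(\<lambda>X. the_elem (phi ` X)) \<in> hom (free_ab Mod H) T"
proof (rule homI)
  fix X assume "X \<in> carrier (free_ab Mod H)"
  then show "the_elem (phi ` X) \<in> carrier T"
    using the_elem_image_rcos[OF assms] hom_in_carrier[OF assms(2)] by (auto simp: carrier_FactGroup)
next
  fix X Y assume "X \<in> carrier (free_ab Mod H)" "Y \<in> carrier (free_ab Mod H)"
  then show "the_elem (phi ` (X \<otimes>\<^bsub>free_ab Mod H\<^esub> Y))
      = the_elem (phi ` X) \<otimes>\<^bsub>T\<^esub> the_elem (phi ` Y)"
    using the_elem_image_rcos[OF assms] hom_mult[OF assms(2)] by (auto simp: carrier_FactGroup free_ab_rcos_add)
qed

lemma group_torsion_free_ab_quotient: "group ((free_ab Mod H)\<lparr>carrier := torsion (free_ab Mod H)\<rparr>)"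
  using normal.factorgroup_is_group[OF free_ab_normal]
    comm_group.subgroup_torsion[OF free_ab.abelian_FactGroup[OF H]]
  by (rule group.subgroup_imp_group)

lemma sylow_torsion_free_ab_quotient_iso:
  fixes T (structure) and p :: nat
  defines "K \<equiv> (free_ab Mod H)\<lparr>carrier := torsion (free_ab Mod H)\<rparr>"
  assumes fin: "finite (torsion (free_ab Mod H))" and p: "prime p"
    and P: "sylow_subgroup p K P"
    and T: "group T" "card (carrier T) = p ^ n"
    and phi: "phi \<in> hom free_ab T" and kill: "\<And>z. z \<in> H \<Longrightarrow> phi z = \<one>"
    and onto: "\<And>t. t \<in> carrier T \<Longrightarrow>
      \<exists>x. H #>\<^bsub>free_ab\<^esub> x \<in> torsion (free_ab Mod H) \<and> phi x = t"
    and no_p_torsion: "\<And>x. (\<lambda>v. int p * x v) \<in> H \<Longrightarrow> phi x = \<one> \<Longrightarrow> x \<in> H"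
  shows "K\<lparr>carrier := P\<rparr> \<cong> T \<and> n = multiplicity p (order K)"
proof -
  define Phi where "Phi X = the_elem (phi ` X)" for X
  have Phi: "Phi (H #>\<^bsub>free_ab\<^esub> x) = phi x" for x
    unfolding Phi_def using T(1) phi kill by (rule the_elem_image_rcos)
  have "Phi \<in> hom K T"
    using free_ab_quotient_hom[OF T(1) phi kill]
    by (auto simp: K_def Phi_def[abs_def] hom_def torsion_def)
  then interpret Phi: group_hom K T Phi
    using group_torsion_free_ab_quotient T(1) by (simp add: K_def group_hom_def group_hom_axioms_def)
  have "Phi ` carrier K = carrier T"
  proof
    show "carrier T \<subseteq> Phi ` carrier K"
    proof
      fix t assume "t \<in> carrier T"
      then obtain x where "H #>\<^bsub>free_ab\<^esub> x \<in> carrier K" "phi x = t"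
        using onto by (auto simp: K_def)
      then show "t \<in> Phi ` carrier K"
        using Phi[of x] by (metis image_eqI)
    qed
  qed (rule Phi.hom_closed[THEN image_subsetI])
  moreover have "X = \<one>\<^bsub>K\<^esub>"
    if X_K: "X \<in> carrier K" and Phi_X: "Phi X = \<one>" and X_p: "X [^]\<^bsub>K\<^esub> p = \<one>\<^bsub>K\<^esub>" for X
  proof -
    obtain x where X: "X = H #>\<^bsub>free_ab\<^esub> x"
      using X_K by (auto simp: K_def torsion_def carrier_FactGroup)
    have "X [^]\<^bsub>free_ab Mod H\<^esub> p = \<one>\<^bsub>free_ab Mod H\<^esub>"
      using X_p by (simp add: K_def nat_pow_def)
    then have "(\<lambda>v. int p * x v) \<in> H"
      using X by (simp add: free_ab_rcos_pow free_ab_rcos_eq_self_iff)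
    then have "x \<in> H"
      using no_p_torsion Phi_X X Phi by simp
    then show ?thesis
      using X by (simp add: K_def free_ab_rcos_eq_self_iff)
  qed
  ultimately show ?thesis
    using Phi.sylow_subgroup_iso_of_surj[OF _ p P _ T(2)] fin by (simp add: K_def)
qed

context
  fixes N :: nat
  assumes H_total: "H \<subseteq> {x. total x = 0}"
    and N: "N > 0" "\<And>x. total x = 0 \<Longrightarrow> (\<lambda>v. int N * x v) \<in> H"
begin

lemma torsion_free_ab_quotient: "torsion (free_ab Mod H) = (\<lambda>x. H #>\<^bsub>free_ab\<^esub> x) ` {x. total x = 0}"
proof (intro equalityI subsetI)
  fix X assume "X \<in> torsion (free_ab Mod H)"
  then obtain x n where X: "X = H #>\<^bsub>free_ab\<^esub> x" and "n > (0::nat)"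
    and "(\<lambda>v. int n * x v) \<in> H"
    by (auto simp: torsion_def carrier_FactGroup free_ab_rcos_pow free_ab_rcos_eq_self_iff)
  then have "int n * total x = 0"
    using H_total by (auto simp: total_def sum_distrib_left)
  then show "X \<in> (\<lambda>x. H #>\<^bsub>free_ab\<^esub> x) ` {x. total x = 0}"
    using X \<open>n > 0\<close> by auto
next
  fix X assume "X \<in> (\<lambda>x. H #>\<^bsub>free_ab\<^esub> x) ` {x. total x = 0}"
  then obtain x where X: "X = H #>\<^bsub>free_ab\<^esub> x" and "total x = 0"
    by auto
  then have "X [^]\<^bsub>free_ab Mod H\<^esub> N = \<one>\<^bsub>free_ab Mod H\<^esub>"
    using N by (simp add: free_ab_rcos_pow free_ab_rcos_eq_self_iff)
  then show "X \<in> torsion (free_ab Mod H)"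
    using X N by (auto simp: torsion_def carrier_FactGroup)
qed

lemma rcos_reduce_mod:
  assumes "total x = 0"
  shows "H #>\<^bsub>free_ab\<^esub> x = H #>\<^bsub>free_ab\<^esub> reduce_mod N v0 x"
proof -
  define t where "t = total (\<lambda>u. x u mod N)"
  have "int N dvd t"
    using assms mod_sum_eq[of x "int N" UNIV] by (simp add: t_def total_def mod_0_imp_dvd)
  moreover have "x v - reduce_mod N v0 x v = int N * (x v div N) + (if v = v0 then t else 0)" for v
    by (simp add: reduce_mod_def t_def minus_mod_eq_mult_div)
  ultimately have "int N dvd x v - reduce_mod N v0 x v" for v
    by (cases "v = v0") simp_all
  moreover define k where "k v = (x v - reduce_mod N v0 x v) div N" for v
  ultimately have k: "x v - reduce_mod N v0 x v = int N * k v" for v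
    by simp
  have "int N * total k = total x - total (reduce_mod N v0 x)"
    by (simp add: total_def sum_distrib_left k[symmetric] sum_subtractf)
  then have "total k = 0"
    using assms N(1) by (simp add: total_reduce_mod)
  then have "(\<lambda>v. x v - reduce_mod N v0 x v) \<in> H"
    using N(2) k by presburger
  then show ?thesis
    by (rule free_ab_rcos_eq_if_diff)
qed

lemma finite_torsion_free_ab_quotient: "finite (torsion (free_ab Mod H))"
proof -
  fix v0 :: 'v
  define C where "C = int (card (UNIV :: 'v set)) * N"
  have "torsion (free_ab Mod H) \<subseteq> (\<lambda>x. H #>\<^bsub>free_ab\<^esub> x) ` ((UNIV :: 'v set) \<rightarrow> {- C .. N})"
  proof
    fix X assume "X \<in> torsion (free_ab Mod H)"
    then obtain x where "X = H #>\<^bsub>free_ab\<^esub> x" "total x = 0"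
      by (auto simp: torsion_free_ab_quotient)
    moreover have "reduce_mod N v0 x \<in> (UNIV :: 'v set) \<rightarrow> {- C .. N}"
      using reduce_mod_bounds[OF N(1)] by (simp add: C_def)
    ultimately show "X \<in> (\<lambda>x. H #>\<^bsub>free_ab\<^esub> x) ` ((UNIV :: 'v set) \<rightarrow> {- C .. N})"
      using rcos_reduce_mod by blast
  qed
  moreover have "finite ((UNIV :: 'v set) \<rightarrow> {- C .. N})"
    using finite_PiE[of "UNIV :: 'v set" "\<lambda>_. {- C .. N}"] by (simp add: PiE_UNIV_domain)
  ultimately show ?thesis
    using finite_subset by blast
qed

end

end

section \<open>Laplacians of Cayley graphs on F_2^2\<close>

lemma UNIV_vec2: "(UNIV :: vec2 set) = {(False, False), (True, False), (False, True), (True, True)}"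
  by (auto simp: UNIV_bool)

lemma sum_vec2:
  "(\<Sum>w\<in>UNIV. f w) = f (False, False) + f (True, False) + f (False, True) + (f (True, True) :: 'a::comm_monoid_add)"
  by (simp add: UNIV_vec2 add.assoc)

lemma vec2_cases:
  obtains "w = (False, False)" | "w = (True, False)" | "w = (False, True)" | "w = (True, True)"
  using UNIV_vec2 by blast

lemma sum_Collect_finite:
  fixes f :: "'a::finite \<Rightarrow> 'b::comm_monoid_add"
  shows "(\<Sum>u | P u. f u) = (\<Sum>u\<in>UNIV. if P u then f u else 0)"
  using sum.inter_filter[of UNIV f P] by simp

lemma vadd_cancel_left [simp]: "vadd u (vadd u w) = w"
  by (cases u; cases w) (auto simp: vadd_def)

lemma vadd_eq_iff: "vadd u v = w \<longleftrightarrow> v = vadd u w"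
  by auto

definition laplacian :: "(vec2 \<Rightarrow> nat) \<Rightarrow> (vec2 \<Rightarrow> int) \<Rightarrow> vec2 \<Rightarrow> int" where
  "laplacian m y u = (\<Sum>v\<in>UNIV. int (m v) * (y u - y (vadd u v)))"

lemma cayley_laplacian_apply:
  assumes "vzero \<notin> set M"
  shows "(\<lambda>u. \<Sum>w\<in>UNIV. cayley_laplacian M u w * y w) = laplacian (count_list M) y"
proof
  fix u
  have count: "card {i. i < length M \<and> vadd u (M ! i) = w} = count_list M (vadd u w)" for w
    unfolding count_list_eq_length_filter length_filter_conv_card
    by (auto intro!: arg_cong[where f = card] simp: vadd_eq_iff)
  have len: "int (length M) = (\<Sum>v\<in>UNIV. int (count_list M v))"
    using sum_count_set[of M UNIV] by (simp flip: of_nat_sum)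
  show "(\<Sum>w\<in>UNIV. cayley_laplacian M u w * y w) = laplacian (count_list M) y u"
    using assms unfolding laplacian_def cayley_laplacian_def count len sum_vec2
    by (cases u) (auto simp: vadd_def vzero_def algebra_simps)
qed

lemma lap_image_cayley_laplacian:
  "vzero \<notin> set M \<Longrightarrow> lap_image (cayley_laplacian M) = range (laplacian (count_list M))"
  by (auto simp: lap_image_def cayley_laplacian_apply)

lemma laplacian_add: "laplacian m (\<lambda>u. y u + z u) = (\<lambda>u. laplacian m y u + laplacian m z u)"
  unfolding laplacian_def
  by (rule ext, subst sum.distrib[symmetric], rule sum.cong) (simp_all add: algebra_simps)

lemma laplacian_mult: "laplacian m (\<lambda>u. k * y u) = (\<lambda>u. k * laplacian m y u)"
  unfolding laplacian_def
  by (rule ext, subst sum_distrib_left, rule sum.cong) (simp_all add: algebra_simps)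

lemma laplacian_add_const: "laplacian m (\<lambda>u. y u + k) = laplacian m y"
  by (simp add: laplacian_def fun_eq_iff)

lemma subgroup_range_laplacian: "subgroup (range (laplacian m)) free_ab"
proof (rule free_ab.subgroupI)
  fix x y assume "x \<in> range (laplacian m)" "y \<in> range (laplacian m)"
  then show "x \<otimes>\<^bsub>free_ab\<^esub> y \<in> range (laplacian m)"
    by (auto simp: laplacian_add[symmetric])
next
  fix x assume "x \<in> range (laplacian m)"
  then obtain z where "x = laplacian m z"
    by auto
  then have "inv\<^bsub>free_ab\<^esub> x = laplacian m (\<lambda>u. -1 * z u)"
    using laplacian_mult[of m "-1" z] by simp
  then show "inv\<^bsub>free_ab\<^esub> x \<in> range (laplacian m)"
    by simp
qed auto

lemma total_laplacian: "total (laplacian m y) = 0"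
  by (simp add: total_def laplacian_def sum_vec2 vadd_def algebra_simps)

lemma sandpile_group_laplacian:
  "vzero \<notin> set M \<Longrightarrow> sandpile_group (cayley_laplacian M)
    = (free_ab Mod range (laplacian (count_list M)))
        \<lparr>carrier := torsion (free_ab Mod range (laplacian (count_list M)))\<rparr>"
  by (simp add: sandpile_group_torsion coker_def lap_image_cayley_laplacian)

text \<open>For the character chi_w(u) = (-1)^(dot u w) of F_2^2, side_sum w x = (total x - <chi_w, x>) / 2,
  and cut_weight m w is the total weight of the Cayley graph edges between the two cosets of the
  kernel of chi_w.\<close>
definition dot :: "vec2 \<Rightarrow> vec2 \<Rightarrow> bool" where
  "dot u w \<longleftrightarrow> (fst u \<and> fst w) \<noteq> (snd u \<and> snd w)"

definition side_sum :: "vec2 \<Rightarrow> (vec2 \<Rightarrow> int) \<Rightarrow> int" where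
  "side_sum w x = (\<Sum>u | dot u w. x u)"

definition cut_weight :: "(vec2 \<Rightarrow> nat) \<Rightarrow> vec2 \<Rightarrow> nat" where
  "cut_weight m w = (\<Sum>v | dot v w. m v)"

lemma dot_vzero: "\<not> dot vzero w"
  by (simp add: dot_def vzero_def)

lemma dot_vadd: "dot (vadd u u') w \<longleftrightarrow> dot u w \<noteq> dot u' w"
  by (auto simp: dot_def vadd_def)

lemma side_sum_vec2:
  "side_sum vzero x = 0"
  "side_sum (True, False) x = x (True, False) + x (True, True)"
  "side_sum (False, True) x = x (False, True) + x (True, True)"
  "side_sum (True, True) x = x (True, False) + x (False, True)"
  unfolding side_sum_def sum_Collect_finite sum_vec2
  by (simp_all add: dot_def vzero_def)

lemma cut_weight_vec2:
  "cut_weight m vzero = 0"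
  "cut_weight m (True, False) = m (True, False) + m (True, True)"
  "cut_weight m (False, True) = m (False, True) + m (True, True)"
  "cut_weight m (True, True) = m (True, False) + m (False, True)"
  unfolding cut_weight_def sum_Collect_finite sum_vec2
  by (simp_all add: dot_def vzero_def)

lemma side_sum_add: "side_sum w (\<lambda>u. x u + y u) = side_sum w x + side_sum w y"
  by (simp add: side_sum_def sum.distrib)

lemma side_sum_mult: "side_sum w (\<lambda>u. k * x u) = k * side_sum w x"
  by (simp add: side_sum_def sum_distrib_left)

lemma total_vec2: "total x = x (False, False) + x (True, False) + x (False, True) + x (True, True)"
  by (simp add: total_def sum_vec2)

lemma laplacian_vec2:
  "laplacian m y u = int (m (True, False)) * (y u - y (vadd u (True, False)))
     + int (m (False, True)) * (y u - y (vadd u (False, True)))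
     + int (m (True, True)) * (y u - y (vadd u (True, True)))"
  by (simp add: laplacian_def sum_vec2 vadd_def)

text \<open>The characters of F_2^2 diagonalize the Laplacian: on the character of w
  it acts by 2 * cut_weight m w.\<close>
lemma side_sum_laplacian:
  "side_sum w (laplacian m y) = int (cut_weight m w) * (2 * side_sum w y - total y)"
  by (cases w rule: vec2_cases)
    (simp_all add: side_sum_vec2[unfolded vzero_def] cut_weight_vec2[unfolded vzero_def]
      laplacian_vec2 total_vec2 vadd_def algebra_simps)

lemma side_sum_if_double:
  assumes "laplacian m y = (\<lambda>u. 2 * x u)"
  shows "2 * side_sum w x = int (cut_weight m w) * (2 * side_sum w y - total y)"
  using side_sum_laplacian[of w m y] side_sum_mult[of w 2 x] assms by simp

lemma dvd_side_sum_laplacian_comb: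
  assumes "int (cut_weight m w) = 2 ^ k * a" "int (cut_weight m w') * c = 2 ^ k * b" "odd a" "odd b"
  shows "2 ^ (k + 1) dvd side_sum w (laplacian m y) + c * side_sum w' (laplacian m y)"
proof -
  define D where "D w = 2 * side_sum w y - total y" for w
  have "c * side_sum w' (laplacian m y) = (int (cut_weight m w') * c) * D w'"
    by (simp add: side_sum_laplacian D_def ac_simps)
  also have "\<dots> = 2 ^ k * b * D w'"
    using assms(2) by simp
  finally have "side_sum w (laplacian m y) + c * side_sum w' (laplacian m y) = 2 ^ k * (a * D w + b * D w')"
    using assms(1) by (simp add: side_sum_laplacian D_def algebra_simps)
  moreover have "even (a * D w + b * D w')"
    using assms(3,4) by (simp add: D_def)
  ultimately show ?thesis
    by (auto elim!: evenE)
qed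

lemma UNIV_vec2_enum:
  assumes "distinct [vzero, w1, w2, w3]"
  shows "UNIV = {vzero, w1, w2, w3}"
proof -
  have "card {vzero, w1, w2, w3} = card (UNIV :: vec2 set)"
    using assms by (simp add: UNIV_vec2)
  then show ?thesis
    using card_subset_eq[of UNIV "{vzero, w1, w2, w3}"] by auto
qed

lemma sum_nonzero_vec2:
  fixes g :: "vec2 \<Rightarrow> 'a::cancel_comm_monoid_add"
  assumes "distinct [vzero, w1, w2, w3]"
  shows "g w1 + g w2 + g w3 = g (True, False) + g (False, True) + g (True, True)"
proof -
  have "g vzero + (g w1 + g w2 + g w3) = sum g UNIV"
    using assms by (simp add: UNIV_vec2_enum[OF assms] add.assoc)
  also have "\<dots> = g vzero + (g (True, False) + g (False, True) + g (True, True))"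
    by (simp add: sum_vec2 vzero_def add.assoc)
  finally show ?thesis
    by simp
qed

lemma nonzero_vec2_enumE:
  assumes "w \<noteq> vzero"
  obtains w' w'' where "distinct [vzero, w, w', w'']"
  using assms
  by (cases w; cases "fst w"; cases "snd w")
    (auto simp: vzero_def intro: that[of "(True, False)" "(False, True)"]
      that[of "(True, False)" "(True, True)"] that[of "(False, True)" "(True, True)"])

lemma sum_side_sums:
  assumes "distinct [vzero, w1, w2, w3]"
  shows "side_sum w1 x + side_sum w2 x + side_sum w3 x = 2 * (total x - x vzero)"
  unfolding sum_nonzero_vec2[OF assms, of "\<lambda>w. side_sum w x"]
  by (simp add: side_sum_vec2 total_vec2 vzero_def)

lemma side_sums_surj:
  assumes "distinct [vzero, w1, w2, w3]" and "even (s1 + s2 + s3)"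
  obtains x where "total x = 0" "side_sum w1 x = s1" "side_sum w2 x = s2" "side_sum w3 x = s3"
proof -
  define s where "s w = (if w = w1 then s1 else if w = w2 then s2 else s3)" for w
  have s: "s w1 = s1" "s w2 = s2" "s w3 = s3"
    using assms(1) by (auto simp: s_def)
  define h where "h = (s1 + s2 + s3) div 2"
  have h: "s (True, False) + s (False, True) + s (True, True) = 2 * h"
    using sum_nonzero_vec2[OF assms(1), of s] assms(2) by (simp add: s h_def)
  define x where "x u = (if u = vzero then - h else h - s (snd u, fst u))" for u
  have side: "side_sum w x = s w" if "w \<noteq> vzero" for w
    using that h by (cases w rule: vec2_cases) (simp_all add: side_sum_vec2 x_def vzero_def)
  show ?thesis
  proof (rule that)
    show "total x = 0"
      using h by (simp add: total_vec2 x_def vzero_def)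
    show "side_sum w1 x = s1" "side_sum w2 x = s2" "side_sum w3 x = s3"
      using side[of w1] side[of w2] side[of w3] s assms(1) by (auto simp: eq_commute[of vzero])
  qed
qed

lemma sum_cut_weights:
  assumes "distinct [vzero, w1, w2, w3]" and "vzero \<notin> set M"
  shows "cut_weight (count_list M) w1 + cut_weight (count_list M) w2 + cut_weight (count_list M) w3
    = 2 * length M"
proof -
  have "length M = (\<Sum>v\<in>UNIV. count_list M v)"
    using sum_count_set[of M UNIV] by simp
  then show ?thesis
    using assms(2) unfolding sum_nonzero_vec2[OF assms(1)]
    by (simp add: cut_weight_vec2 sum_vec2 vzero_def)
qed

lemma cut_weight_pos:
  assumes "generates M" and "w \<noteq> vzero"
  shows "cut_weight (count_list M) w > 0"
proof (rule ccontr)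
  assume "\<not> cut_weight (count_list M) w > 0"
  then have "count_list M v = 0" if "dot v w" for v
    using that by (cases v) (simp add: cut_weight_def)
  then have "\<not> dot v w" if "v \<in> set M" for v
    using that by (metis count_list_0_iff)
  then have "\<not> dot (foldr vadd xs vzero) w" if "set xs \<subseteq> set M" for xs
    using that by (induction xs) (auto simp: dot_vadd dot_vzero)
  moreover obtain u where "dot u w"
    using assms(2) by (cases w rule: vec2_cases)
      (auto simp: dot_def vzero_def intro: that[of "(True, False)"] that[of "(False, True)"])
  ultimately show False
    using assms(1) unfolding generates_def by metis
qed

text \<open>Multiplying by twice the product of the three cut weights clears the denominators of the
  inverse of the Laplacian on sum-zero vectors.\<close>
lemma mult_mem_range_laplacian:
  fixes m :: "vec2 \<Rightarrow> nat"
  defines "p w \<equiv> int (cut_weight m w)"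
  assumes "total x = 0"
  shows "(\<lambda>u. 2 * p (True, False) * p (False, True) * p (True, True) * x u) \<in> range (laplacian m)"
proof -
  define y where "y u = - ((if dot u (True, False) then 0 else p (False, True) * p (True, True) * side_sum (True, False) x)
    + (if dot u (False, True) then 0 else p (True, False) * p (True, True) * side_sum (False, True) x)
    + (if dot u (True, True) then 0 else p (True, False) * p (False, True) * side_sum (True, True) x))" for u
  have x0: "x (False, False) = - x (True, False) - x (False, True) - x (True, True)"
    using assms(2) by (simp add: total_vec2)
  have "laplacian m y u = 2 * p (True, False) * p (False, True) * p (True, True) * x u" for u
    by (cases u rule: vec2_cases)
      (simp_all add: laplacian_vec2 y_def p_def cut_weight_vec2 side_sum_vec2 vadd_def dot_def x0 algebra_simps)
  then show ?thesis
    by (metis rangeI ext)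
qed

lemma torsion_quotient_laplacian:
  assumes pos: "\<And>w. w \<noteq> vzero \<Longrightarrow> cut_weight m w > 0"
  shows "torsion (free_ab Mod range (laplacian m))
      = (\<lambda>x. range (laplacian m) #>\<^bsub>free_ab\<^esub> x) ` {x. total x = 0}"
    and "finite (torsion (free_ab Mod range (laplacian m)))"
proof -
  define N where "N = 2 * cut_weight m (True, False) * cut_weight m (False, True) * cut_weight m (True, True)"
  have "N > 0"
    using pos by (simp add: N_def vzero_def)
  moreover have "range (laplacian m) \<subseteq> {x. total x = 0}"
    by (auto simp: total_laplacian)
  moreover have "(\<lambda>v. int N * x v) \<in> range (laplacian m)" if "total x = 0" for x
    using mult_mem_range_laplacian[OF that] by (simp add: N_def mult.assoc)
  ultimately show "torsion (free_ab Mod range (laplacian m))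
      = (\<lambda>x. range (laplacian m) #>\<^bsub>free_ab\<^esub> x) ` {x. total x = 0}"
    and "finite (torsion (free_ab Mod range (laplacian m)))"
    using torsion_free_ab_quotient[OF subgroup_range_laplacian] finite_torsion_free_ab_quotient[OF subgroup_range_laplacian]
    by simp_all
qed

lemma half_mem_range_laplacian:
  assumes "laplacian m y = (\<lambda>u. 2 * x u)" and "\<And>u. even (y u - y vzero)"
  shows "x \<in> range (laplacian m)"
proof -
  define z where "z u = (y u - y vzero) div 2" for u
  have "y = (\<lambda>u. 2 * z u + y vzero)"
    using assms(2) by (auto simp: z_def)
  then have "laplacian m y = (\<lambda>u. 2 * laplacian m z u)"
    by (metis laplacian_add_const laplacian_mult)
  then have "x = laplacian m z"
    using assms(1) by (simp add: fun_eq_iff)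
  then show ?thesis
    by simp
qed

lemma even_diff_if_even_side_sums:
  assumes "even (total y)" "even (side_sum (True, False) y)" "even (side_sum (False, True) y)"
  shows "even (y u - y vzero)"
  using assms by (cases u rule: vec2_cases) (auto simp: total_vec2 side_sum_vec2 vzero_def)

lemma mem_range_laplacian_if_double:
  assumes w: "distinct [vzero, w1, w2, w3]"
    and x: "laplacian m y = (\<lambda>u. 2 * x u)" and "even (total y)"
    and "even (side_sum w1 y - side_sum w2 y)" "even (side_sum w1 y - side_sum w3 y)"
  shows "x \<in> range (laplacian m)"
proof -
  have "even (side_sum w1 y + side_sum w2 y + side_sum w3 y)"
    unfolding sum_side_sums[OF w] by simp
  then have "even (side_sum w y)" if "w \<in> {vzero, w1, w2, w3}" for w
    using that assms(4,5) by (auto simp: side_sum_vec2)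
  then have "even (side_sum w y)" for w
    using UNIV_vec2_enum[OF w] by blast
  then show ?thesis
    using half_mem_range_laplacian[OF x] even_diff_if_even_side_sums[OF assms(3)] by blast
qed

lemma mem_range_laplacian_if_double_cyclic:
  fixes m :: "vec2 \<Rightarrow> nat"
  defines "p w \<equiv> int (cut_weight m w)"
  assumes w: "distinct [vzero, w1, w2, w3]"
    and p: "p w1 = 2 ^ k * u" "k \<ge> 1" "odd u" "odd (p w2)" "odd (p w3)"
    and x: "laplacian m y = (\<lambda>v. 2 * x v)"
    and dvd: "2 ^ (k + 1) dvd side_sum w1 x + 2 ^ k * side_sum w2 x"
  shows "x \<in> range (laplacian m)"
proof -
  define \<sigma> where "\<sigma> w = side_sum w y" for w
  have S: "2 * side_sum w x = p w * (2 * \<sigma> w - total y)" for w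
    using side_sum_if_double[OF x] by (simp add: p_def \<sigma>_def)
  have "even (p w2 * (2 * \<sigma> w2 - total y))"
    using S[of w2] by (metis dvd_triv_left)
  then have "even (total y)"
    using p(4) by simp
  then obtain \<tau> where \<tau>: "total y = 2 * \<tau>"
    by blast
  have S': "side_sum w x = p w * (\<sigma> w - \<tau>)" for w
    using S[of w] by (simp add: \<tau> algebra_simps)
  have "2 ^ k * 2 dvd 2 ^ k * (u * (\<sigma> w1 - \<tau>) + p w2 * (\<sigma> w2 - \<tau>))"
    using dvd p(1) by (simp add: S' algebra_simps)
  then have "even (\<sigma> w1 - \<sigma> w2)"
    using p(3,4) by auto
  moreover have "even (side_sum w1 x + side_sum w2 x + side_sum w3 x)"
    unfolding sum_side_sums[OF w] by simp
  then have "even (\<sigma> w2 - \<sigma> w3)"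
    using p(1,2,4,5) by (auto simp: S')
  ultimately show ?thesis
    using mem_range_laplacian_if_double[OF w x \<open>even (total y)\<close>] by (simp add: \<sigma>_def)
qed

lemma mem_range_laplacian_if_double_two_factors:
  fixes m :: "vec2 \<Rightarrow> nat"
  defines "p w \<equiv> int (cut_weight m w)"
  assumes w: "distinct [vzero, w1, w2, w3]"
    and p: "p w1 = 2 * u1" "odd u1" "p w2 = 2 ^ Suc j2 * u2" "odd u2" "p w3 = 2 ^ Suc j3 * u3" "odd u3"
    and n: "odd (u1 + 2 ^ j2 * u2 + 2 ^ j3 * u3)"
    and x: "laplacian m y = (\<lambda>v. 2 * x v)"
    and dvd: "2 ^ (j2 + 2) dvd side_sum w2 x + 2 ^ j2 * side_sum w1 x"
      "2 ^ (j3 + 2) dvd side_sum w3 x + 2 ^ j3 * side_sum w1 x"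
  shows "x \<in> range (laplacian m)"
proof -
  define \<sigma> where "\<sigma> w = side_sum w y" for w
  have S: "2 * side_sum w x = p w * (2 * \<sigma> w - total y)" for w
    using side_sum_if_double[OF x] by (simp add: p_def \<sigma>_def)
  have "even (side_sum w1 x + side_sum w2 x + side_sum w3 x)"
    unfolding sum_side_sums[OF w] by simp
  moreover have "side_sum w1 x + side_sum w2 x + side_sum w3 x
      = 2 * (u1 * \<sigma> w1 + 2 ^ j2 * u2 * \<sigma> w2 + 2 ^ j3 * u3 * \<sigma> w3)
        - total y * (u1 + 2 ^ j2 * u2 + 2 ^ j3 * u3)"
    using S[of w1] S[of w2] S[of w3] p(1,3,5) by (simp add: algebra_simps)
  ultimately have "even (total y * (u1 + 2 ^ j2 * u2 + 2 ^ j3 * u3))"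
    by simp
  then have "even (total y)"
    using n unfolding even_mult_iff by blast
  then obtain \<tau> where \<tau>: "total y = 2 * \<tau>"
    by blast
  have S': "side_sum w x = p w * (\<sigma> w - \<tau>)" for w
    using S[of w] by (simp add: \<tau> algebra_simps)
  have "2 ^ (j2 + 1) * 2 dvd 2 ^ (j2 + 1) * (u2 * (\<sigma> w2 - \<tau>) + u1 * (\<sigma> w1 - \<tau>))"
       "2 ^ (j3 + 1) * 2 dvd 2 ^ (j3 + 1) * (u3 * (\<sigma> w3 - \<tau>) + u1 * (\<sigma> w1 - \<tau>))"
    using dvd p(1,3,5) by (simp_all add: S' algebra_simps)
  then have "even (u2 * (\<sigma> w2 - \<tau>) + u1 * (\<sigma> w1 - \<tau>))"
    "even (u3 * (\<sigma> w3 - \<tau>) + u1 * (\<sigma> w1 - \<tau>))"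
    by (simp_all only: dvd_mult_cancel_left) simp_all
  then have "even (\<sigma> w1 - \<sigma> w2)" "even (\<sigma> w1 - \<sigma> w3)"
    using p(2,4,6) by auto
  then show ?thesis
    using mem_range_laplacian_if_double[OF w x \<open>even (total y)\<close>] by (simp add: \<sigma>_def)
qed

lemma sylow_sandpile_iso:
  fixes T (structure) and M :: "vec2 list"
  defines "K \<equiv> sandpile_group (cayley_laplacian M)" and "L \<equiv> laplacian (count_list M)"
  assumes M: "vzero \<notin> set M" "generates M"
    and P: "sylow_subgroup 2 K P"
    and T: "group T" "card (carrier T) = 2 ^ n"
    and phi: "phi \<in> hom free_ab T"
    and kill: "\<And>y. phi (L y) = \<one>"
    and onto: "\<And>t. t \<in> carrier T \<Longrightarrow> \<exists>x. total x = 0 \<and> phi x = t"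
    and no_2_torsion: "\<And>x y. L y = (\<lambda>u. 2 * x u) \<Longrightarrow> phi x = \<one> \<Longrightarrow> x \<in> range L"
  shows "K\<lparr>carrier := P\<rparr> \<cong> T \<and> n = multiplicity 2 (order K)"
proof -
  define H where "H = range L"
  have H: "subgroup H free_ab"
    unfolding H_def L_def by (rule subgroup_range_laplacian)
  have K: "K = (free_ab Mod H)\<lparr>carrier := torsion (free_ab Mod H)\<rparr>"
    using M(1) by (simp add: K_def H_def L_def sandpile_group_laplacian)
  have torsion: "torsion (free_ab Mod H) = (\<lambda>x. H #>\<^bsub>free_ab\<^esub> x) ` {x. total x = 0}"
    and fin: "finite (torsion (free_ab Mod H))"
    using torsion_quotient_laplacian[of "count_list M"] cut_weight_pos[OF M(2)] by (simp_all add: H_def L_def)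
  show ?thesis
    unfolding K
  proof (rule sylow_torsion_free_ab_quotient_iso[OF H fin two_is_prime_nat _ T phi])
    show "sylow_subgroup 2 ((free_ab Mod H)\<lparr>carrier := torsion (free_ab Mod H)\<rparr>) P"
      using P K by simp
    show "phi z = \<one>" if "z \<in> H" for z
      using that kill by (auto simp: H_def)
    show "\<exists>x. H #>\<^bsub>free_ab\<^esub> x \<in> torsion (free_ab Mod H) \<and> phi x = t" if "t \<in> carrier T" for t
      using onto[OF that] torsion by blast
    show "x \<in> H" if "(\<lambda>v. int 2 * x v) \<in> H" "phi x = \<one>" for x
      using that no_2_torsion by (auto simp: H_def)
  qed
qed

section \<open>The Sylow 2-subgroup of the sandpile group\<close>

lemma hom_integer_mod_group_of_additive:
  assumes "\<And>x y. F (\<lambda>v. x v + y v) = F x + F y" and "n > 0"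
  shows "(\<lambda>x. F x mod int n) \<in> hom free_ab (integer_mod_group n)"
  using assms by (intro homI) (simp_all add: carrier_integer_mod_group integer_mod_group_def mod_add_eq)

lemma card_integer_mod_group: "n > 0 \<Longrightarrow> card (carrier (integer_mod_group n)) = n"
  by (simp add: carrier_integer_mod_group)

lemma odd_part_decompose:
  fixes n :: nat
  assumes "n > 0"
  obtains u where "int n = 2 ^ multiplicity 2 n * u" "odd u"
proof -
  obtain u where "n = 2 ^ multiplicity 2 n * u" "\<not> 2 dvd u"
    using multiplicity_decompose'[of n 2] assms by auto
  then show ?thesis
    using that[of "int u"] by (metis even_of_nat_iff of_nat_mult of_nat_numeral of_nat_power)
qed

lemma sylow_sandpile_cyclic_explicit:
  fixes M :: "vec2 list"
  defines "K \<equiv> sandpile_group (cayley_laplacian M)" and "p \<equiv> \<lambda>w. int (cut_weight (count_list M) w)"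
  assumes M: "vzero \<notin> set M" "generates M"
    and P: "sylow_subgroup 2 K P"
    and w: "distinct [vzero, w1, w2, w3]"
    and p: "p w1 = 2 ^ k * u" "k \<ge> 1" "odd u" "odd (p w2)" "odd (p w3)"
  shows "K\<lparr>carrier := P\<rparr> \<cong> integer_mod_group (2 ^ (k + 1))"
proof -
  let ?L = "laplacian (count_list M)"
  let ?T = "integer_mod_group (2 ^ (k + 1))"
  define F where "F x = side_sum w1 x + 2 ^ k * side_sum w2 x" for x
  define phi where "phi x = F x mod int (2 ^ (k + 1))" for x
  have phi: "phi \<in> hom free_ab ?T"
    unfolding phi_def[abs_def]
    by (rule hom_integer_mod_group_of_additive) (simp_all add: F_def side_sum_add algebra_simps)
  have kill: "phi (?L y) = \<one>\<^bsub>?T\<^esub>" for y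
  proof -
    have "2 ^ (k + 1) dvd F (?L y)"
      unfolding F_def using p unfolding p_def
      by (intro dvd_side_sum_laplacian_comb[where a = u and b = "p w2"]) (simp_all add: p_def mult.commute)
    then show ?thesis
      by (simp add: phi_def mod_eq_0_iff_dvd)
  qed
  have onto: "\<exists>x. total x = 0 \<and> phi x = t" if "t \<in> carrier ?T" for t
  proof -
    obtain x where "total x = 0" "side_sum w1 x = t" "side_sum w2 x = 0" "side_sum w3 x = t"
      using side_sums_surj[OF w, of t 0 t] by auto
    then show ?thesis
      using that by (auto simp: phi_def F_def carrier_integer_mod_group)
  qed
  have no_2_torsion: "x \<in> range ?L" if "?L y = (\<lambda>u. 2 * x u)" "phi x = \<one>\<^bsub>?T\<^esub>" for x y
    using mem_range_laplacian_if_double_cyclic[OF w p[unfolded p_def] that(1)] that(2)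
    by (simp add: phi_def F_def mod_eq_0_iff_dvd)
  have card: "card (carrier ?T) = 2 ^ (k + 1)"
    by (simp add: card_integer_mod_group)
  have "K\<lparr>carrier := P\<rparr> \<cong> ?T \<and> k + 1 = multiplicity 2 (order K)"
    unfolding K_def
    by (rule sylow_sandpile_iso[OF M P[unfolded K_def] group_integer_mod_group])
      (fact card phi kill onto no_2_torsion)+
  then show ?thesis
    by (rule conjunct1)
qed

lemma sylow_sandpile_cyclic:
  fixes M :: "vec2 list"
  defines "K \<equiv> sandpile_group (cayley_laplacian M)" and "p \<equiv> cut_weight (count_list M)"
  assumes M: "vzero \<notin> set M" "generates M"
    and P: "sylow_subgroup 2 K P"
    and w: "w \<noteq> vzero" "even (p w)" "\<And>w'. w' \<notin> {vzero, w} \<Longrightarrow> odd (p w')"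
  shows "K\<lparr>carrier := P\<rparr> \<cong> integer_mod_group (2 ^ (multiplicity 2 (p w) + 1))"
proof -
  obtain w' w'' where enum: "distinct [vzero, w, w', w'']"
    using nonzero_vec2_enumE[OF w(1)] .
  have "p w > 0"
    using cut_weight_pos[OF M(2) w(1)] by (simp add: p_def)
  then obtain u where "int (p w) = 2 ^ multiplicity 2 (p w) * u" "odd u"
    by (rule odd_part_decompose)
  moreover have "multiplicity 2 (p w) \<ge> 1"
    using \<open>p w > 0\<close> w(2) by (simp add: Suc_le_eq multiplicity_gt_zero_iff)
  moreover have "odd (p w')" "odd (p w'')"
    using w(3)[of w'] w(3)[of w''] enum by auto
  ultimately show ?thesis
    using sylow_sandpile_cyclic_explicit[OF M P[unfolded K_def] enum] by (simp add: K_def p_def)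
qed

lemma sylow_sandpile_two_factors_explicit:
  fixes M :: "vec2 list"
  defines "K \<equiv> sandpile_group (cayley_laplacian M)" and "p \<equiv> \<lambda>w. int (cut_weight (count_list M) w)"
  assumes M: "vzero \<notin> set M" "generates M" "odd (length M)"
    and P: "sylow_subgroup 2 K P"
    and w: "distinct [vzero, w1, w2, w3]"
    and p: "p w1 = 2 * u1" "odd u1" "p w2 = 2 ^ Suc j2 * u2" "odd u2" "p w3 = 2 ^ Suc j3 * u3" "odd u3"
  shows "K\<lparr>carrier := P\<rparr> \<cong> integer_mod_group (2 ^ (j2 + 2)) \<times>\<times> integer_mod_group (2 ^ (j3 + 2))
    \<and> j2 + j3 + 4 = multiplicity 2 (order K)"
proof -
  let ?L = "laplacian (count_list M)"
  let ?T = "integer_mod_group (2 ^ (j2 + 2)) \<times>\<times> integer_mod_group (2 ^ (j3 + 2))"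
  define n where "n = u1 + 2 ^ j2 * u2 + 2 ^ j3 * u3"
  have "2 * n = 2 * int (length M)"
    using sum_cut_weights[OF w M(1)] p(1,3,5) unfolding p_def n_def by (simp add: algebra_simps)
  then have odd_n: "odd n"
    using M(3) by simp
  define F2 where "F2 x = side_sum w2 x + 2 ^ j2 * side_sum w1 x" for x
  define F3 where "F3 x = side_sum w3 x + 2 ^ j3 * side_sum w1 x" for x
  define phi where "phi x = (F2 x mod int (2 ^ (j2 + 2)), F3 x mod int (2 ^ (j3 + 2)))" for x
  have phi: "phi \<in> hom free_ab ?T"
    unfolding phi_def[abs_def] hom_paired
    by (intro conjI hom_integer_mod_group_of_additive) (simp_all add: F2_def F3_def side_sum_add algebra_simps)
  have kill: "phi (?L y) = \<one>\<^bsub>?T\<^esub>" for y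
  proof -
    have "2 ^ (j2 + 1 + 1) dvd side_sum w2 (?L y) + 2 ^ j2 * side_sum w1 (?L y)"
      by (rule dvd_side_sum_laplacian_comb[where a = u2 and b = u1]) (use p in \<open>simp_all add: p_def\<close>)
    moreover have "2 ^ (j3 + 1 + 1) dvd side_sum w3 (?L y) + 2 ^ j3 * side_sum w1 (?L y)"
      by (rule dvd_side_sum_laplacian_comb[where a = u3 and b = u1]) (use p in \<open>simp_all add: p_def\<close>)
    ultimately have "2 ^ (j2 + 2) dvd F2 (?L y)" "2 ^ (j3 + 2) dvd F3 (?L y)"
      by (simp_all add: F2_def F3_def)
    then show ?thesis
      by (simp add: phi_def mod_eq_0_iff_dvd)
  qed
  have onto: "\<exists>x. total x = 0 \<and> phi x = t" if t_T: "t \<in> carrier ?T" for t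
  proof -
    obtain i j where t: "t = (i, j)" "0 \<le> i" "i < 2 ^ (j2 + 2)" "0 \<le> j" "j < 2 ^ (j3 + 2)"
      using t_T by (cases t) (auto simp: carrier_integer_mod_group)
    have "even (2 ^ j2 * u2 + 2 ^ j3 * u3)"
      using odd_n p(2) unfolding n_def by (metis add.assoc odd_add)
    then have "even ((2 :: int) ^ j2 + 2 ^ j3)"
      using p(4,6) by auto
    then have "even ((i + j) + (i - 2 ^ j2 * (i + j)) + (j - 2 ^ j3 * (i + j)))"
      by (simp add: algebra_simps)
    then obtain x where "total x = 0" "side_sum w1 x = i + j"
      "side_sum w2 x = i - 2 ^ j2 * (i + j)" "side_sum w3 x = j - 2 ^ j3 * (i + j)"
      by (rule side_sums_surj[OF w])
    then show ?thesis
      using t by (auto simp: phi_def F2_def F3_def)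
  qed
  have no_2_torsion: "x \<in> range ?L" if "?L y = (\<lambda>u. 2 * x u)" "phi x = \<one>\<^bsub>?T\<^esub>" for x y
    using mem_range_laplacian_if_double_two_factors[OF w p[unfolded p_def] odd_n[unfolded n_def] that(1)] that(2)
    by (simp add: phi_def F2_def F3_def mod_eq_0_iff_dvd)
  have card: "card (carrier ?T) = 2 ^ (j2 + j3 + 4)"
    by (simp add: card_integer_mod_group card_cartesian_product power_add)
  show ?thesis
    unfolding K_def
    by (rule sylow_sandpile_iso[OF M(1,2) P[unfolded K_def]
          DirProd_group[OF group_integer_mod_group group_integer_mod_group]])
      (fact card phi kill onto no_2_torsion)+
qed

lemma cut_weight_multiplicity_oneE:
  assumes M: "vzero \<notin> set M" "generates M" "odd (length M)"
    and even: "\<And>w. even (cut_weight (count_list M) w)"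
  obtains w where "w \<noteq> vzero" "multiplicity 2 (cut_weight (count_list M) w) = 1"
proof (rule ccontr)
  note multiplicity_one = that
  define p where "p w = cut_weight (count_list M) w" for w
  assume "\<not> thesis"
  then have "multiplicity 2 (p w) \<noteq> 1" if "w \<noteq> vzero" for w
    using that multiplicity_one[of w] \<open>\<not> thesis\<close> by (auto simp: p_def)
  moreover have "multiplicity 2 (p w) \<noteq> 0" if "w \<noteq> vzero" for w
    using cut_weight_pos[OF M(2) that] even[of w] by (simp add: p_def multiplicity_gt_zero_iff)
  ultimately have "multiplicity 2 (p w) \<ge> 2" if "w \<noteq> vzero" for w
    using that by fastforce
  then have "4 dvd p w" if "w \<noteq> vzero" for w
    using that multiplicity_dvd[of 2 "p w"] le_imp_power_dvd[of 2 "multiplicity 2 (p w)" 2]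
    by (metis dvd_trans numeral_Bit0_eq_double numeral_One power2_eq_square mult_2_right)
  then have "4 dvd p (True, False) + p (False, True) + p (True, True)"
    by (simp add: vzero_def)
  moreover have "distinct [vzero, (True, False), (False, True), (True, True)]"
    by (simp add: vzero_def)
  ultimately have "even (length M)"
    using sum_cut_weights M(1) by (fastforce simp: p_def elim!: dvdE)
  then show False
    using M(3) by simp
qed

lemma sylow_sandpile_two_factors:
  fixes M :: "vec2 list"
  defines "K \<equiv> sandpile_group (cayley_laplacian M)"
    and "v \<equiv> \<lambda>w. multiplicity 2 (cut_weight (count_list M) w)"
  defines "f \<equiv> Max (v ` (UNIV - {vzero})) + 1"
  assumes M: "vzero \<notin> set M" "generates M" "odd (length M)"
    and P: "sylow_subgroup 2 K P"
    and even: "\<And>w. even (cut_weight (count_list M) w)"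
  shows "K\<lparr>carrier := P\<rparr> \<cong>
    integer_mod_group (2 ^ (multiplicity 2 (order K) - f)) \<times>\<times> integer_mod_group (2 ^ f)"
proof -
  define p where "p w = cut_weight (count_list M) w" for w
  have v_pos: "v w \<ge> 1" and decompose: "\<exists>u. int (p w) = 2 ^ v w * u \<and> odd u" if "w \<noteq> vzero" for w
    using cut_weight_pos[OF M(2) that] even[of w] odd_part_decompose
    by (auto simp: v_def p_def Suc_le_eq multiplicity_gt_zero_iff)
  obtain z1 where z1: "z1 \<noteq> vzero" "v z1 = 1"
    using cut_weight_multiplicity_oneE[OF M even] by (auto simp: v_def)
  obtain z2 z3 where z: "distinct [vzero, z1, z2, z3]" "v z2 \<le> v z3"
  proof -
    obtain w w' where "distinct [vzero, z1, w, w']"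
      using nonzero_vec2_enumE[OF z1(1)] .
    then show ?thesis
      using that[of w w'] that[of w' w] by (cases "v w \<le> v w'") auto
  qed
  then have nonzero: "z2 \<noteq> vzero" "z3 \<noteq> vzero"
    by auto
  obtain u1 u2 u3 where u: "int (p z1) = 2 * u1" "odd u1" "int (p z2) = 2 ^ v z2 * u2" "odd u2"
    "int (p z3) = 2 ^ v z3 * u3" "odd u3"
    using decompose[OF z1(1)] decompose[OF nonzero(1)] decompose[OF nonzero(2)] z1(2) by auto
  obtain j2 j3 where j: "v z2 = Suc j2" "v z3 = Suc j3"
    using v_pos[OF nonzero(1)] v_pos[OF nonzero(2)] by (metis not0_implies_Suc not_one_le_zero)
  have iso: "K\<lparr>carrier := P\<rparr> \<cong> integer_mod_group (2 ^ (j2 + 2)) \<times>\<times> integer_mod_group (2 ^ (j3 + 2))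
    \<and> j2 + j3 + 4 = multiplicity 2 (order K)"
    unfolding K_def
    using sylow_sandpile_two_factors_explicit[OF M P[unfolded K_def] z(1) u(1,2)[unfolded p_def]
        u(3,4)[unfolded j(1) p_def] u(5,6)[unfolded j(2) p_def]] .
  have "UNIV - {vzero} = {z1, z2, z3}"
    using UNIV_vec2_enum[OF z(1)] z(1) by auto
  then have f: "f = j3 + 2"
    using z(2) z1(2) j by (simp add: f_def)
  then have "multiplicity 2 (order K) - f = j2 + 2"
    using iso by linarith
  with iso f show ?thesis
    by simp
qed

lemma M_abc_nonzero: "vzero \<notin> set (M_abc a b c)"
  by (auto simp: M_abc_def vzero_def)

lemma length_M_abc: "length (M_abc a b c) = a + b + c"
  by (simp add: M_abc_def)

lemma count_list_replicate: "count_list (replicate n x) y = (if x = y then n else 0)"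
  by (induction n) auto

lemma cut_weight_M_abc:
  "cut_weight (count_list (M_abc a b c)) (True, False) = a + c"
  "cut_weight (count_list (M_abc a b c)) (False, True) = b + c"
  "cut_weight (count_list (M_abc a b c)) (True, True) = a + b"
  by (simp_all add: cut_weight_vec2 M_abc_def count_list_replicate)

theorem mainTheorem14:
  fixes a b c :: nat and P :: "(vec2 \<Rightarrow> int) set set"
  assumes "gcd a (gcd b c) = 1"
    and "generates (M_abc a b c)"
    and "sylow_subgroup 2 (sandpile_group (cayley_laplacian (M_abc a b c))) P"
  defines "K \<equiv> sandpile_group (cayley_laplacian (M_abc a b c))"
  shows "(odd a \<and> even b \<and> even c \<longrightarrow>
            K\<lparr>carrier := P\<rparr> \<cong> integer_mod_group (2 ^ (multiplicity 2 (b + c) + 1)))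
       \<and> (odd a \<and> odd b \<and> even c \<longrightarrow>
            K\<lparr>carrier := P\<rparr> \<cong> integer_mod_group (2 ^ (multiplicity 2 (a + b) + 1)))
       \<and> (odd a \<and> odd b \<and> odd c \<longrightarrow>
            (let f = max (multiplicity 2 (a + b)) (max (multiplicity 2 (b + c)) (multiplicity 2 (a + c))) + 1;
                 e = multiplicity 2 (order K) - f
             in K\<lparr>carrier := P\<rparr> \<cong> integer_mod_group (2 ^ e) \<times>\<times> integer_mod_group (2 ^ f)))"
proof -
  let ?p = "cut_weight (count_list (M_abc a b c))"
  note sylow = M_abc_nonzero[of a b c] assms(2,3)
  show ?thesis
  proof (intro conjI impI)
    assume "odd a \<and> even b \<and> even c"
    moreover have "odd (?p w)" if "w \<notin> {vzero, (False, True)}" for w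
      using that \<open>odd a \<and> even b \<and> even c\<close>
      by (cases w rule: vec2_cases) (simp_all add: cut_weight_M_abc vzero_def)
    ultimately show "K\<lparr>carrier := P\<rparr> \<cong> integer_mod_group (2 ^ (multiplicity 2 (b + c) + 1))"
      using sylow_sandpile_cyclic[OF sylow, of "(False, True)"] by (simp add: K_def cut_weight_M_abc vzero_def)
  next
    assume "odd a \<and> odd b \<and> even c"
    moreover have "odd (?p w)" if "w \<notin> {vzero, (True, True)}" for w
      using that \<open>odd a \<and> odd b \<and> even c\<close>
      by (cases w rule: vec2_cases) (simp_all add: cut_weight_M_abc vzero_def)
    ultimately show "K\<lparr>carrier := P\<rparr> \<cong> integer_mod_group (2 ^ (multiplicity 2 (a + b) + 1))"
      using sylow_sandpile_cyclic[OF sylow, of "(True, True)"] by (simp add: K_def cut_weight_M_abc vzero_def)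
  next
    assume odd: "odd a \<and> odd b \<and> odd c"
    have "even (?p w)" for w
      using odd by (cases w rule: vec2_cases) (simp_all add: cut_weight_M_abc cut_weight_vec2(1)[unfolded vzero_def])
    moreover have "odd (length (M_abc a b c))"
      using odd by (simp add: length_M_abc)
    moreover have "UNIV - {vzero} = {(True, True), (False, True), (True, False)}"
      by (auto simp: UNIV_vec2 vzero_def)
    ultimately show "let f = max (multiplicity 2 (a + b)) (max (multiplicity 2 (b + c)) (multiplicity 2 (a + c))) + 1;
        e = multiplicity 2 (order K) - f
      in K\<lparr>carrier := P\<rparr> \<cong> integer_mod_group (2 ^ e) \<times>\<times> integer_mod_group (2 ^ f)"
      using sylow_sandpile_two_factors[OF sylow(1,2) _ sylow(3)]
      by (simp add: K_def cut_weight_M_abc Let_def)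
  qed
qed

end
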